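(* For every $n\ge2$, the set $\mathcal{MV}(n,2)$ has nonempty interior in $\mathbb R^{\binom{n+1}2}$; in particular its topological dimension is $\binom{n+1}2$. Consequently, the topological dimension of $\mathcal{PMV}(n,2)$ is $\binom n2$.
   Context: $\mathcal K_2$ denotes the set of nonempty compact convex subsets of $\mathbb R^2$. The mixed area of $K,L\in\mathcal K_2$ is $\mathrm V(K,L)=\tfrac12\big(\mathrm{Vol}_2(K+L)-\mathrm{Vol}_2(K)-\mathrm{Vol}_2(L)\big)$, so $\mathrm V(K,K)=\mathrm{Vol}_2(K)$. The mixed volume configuration space is $\mathcal{MV}(n,2)=\{(\mathrm V(K_i,K_j))_{1\le i\le j\le n}\in\mathbb R^{\binom{n+1}2}: K_1,\dots,K_n\in\mathcal K_2\}$, and $\mathcal{PMV}(n,2)=\{(\mathrm V(K_i,K_j))_{1\le i<j\le n}\in\mathbb R^{\binom n2}: K_1,\dots,K_n\in\mathcal K_2\}$. *)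

theory Defs
  imports "HOL-Analysis.Analysis"
begin

definition convex_body2 :: "(real^2) set \<Rightarrow> bool" where
  "convex_body2 K \<longleftrightarrow> K \<noteq> {} \<and> compact K \<and> convex K"

definition vol2 :: "(real^2) set \<Rightarrow> real" where
  "vol2 K = measure lebesgue K"

definition minkowski_sum :: "(real^2) set \<Rightarrow> (real^2) set \<Rightarrow> (real^2) set" where
  "minkowski_sum K L = {x + y | x y. x \<in> K \<and> y \<in> L}"

definition mixed_area :: "(real^2) set \<Rightarrow> (real^2) set \<Rightarrow> real" where
  "mixed_area K L = (vol2 (minkowski_sum K L) - vol2 K - vol2 L) / 2"

text \<open>Coordinates of R^N are realised as functions nat => real vanishing from N on
  (the topology Euclidean_space N). The pair (i,j), i <= j < n (0-based) is sent to the
  coordinate j(j+1)/2 + i, a bijection onto {0..<(n+1) choose 2}; the pair (i,j),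
  i < j < n, is sent to j(j-1)/2 + i, a bijection onto {0..<n choose 2}.\<close>
definition MV :: "nat \<Rightarrow> (nat \<Rightarrow> real) set" where
  "MV n = {x. \<exists>K :: nat \<Rightarrow> (real^2) set. (\<forall>i<n. convex_body2 (K i)) \<and>
      (\<forall>i j. i \<le> j \<and> j < n \<longrightarrow> x (j * (j + 1) div 2 + i) = mixed_area (K i) (K j)) \<and>
      (\<forall>k\<ge>(n + 1) choose 2. x k = 0)}"

definition PMV :: "nat \<Rightarrow> (nat \<Rightarrow> real) set" where
  "PMV n = {x. \<exists>K :: nat \<Rightarrow> (real^2) set. (\<forall>i<n. convex_body2 (K i)) \<and>
      (\<forall>i j. i < j \<and> j < n \<longrightarrow> x (j * (j - 1) div 2 + i) = mixed_area (K i) (K j)) \<and>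
      (\<forall>k\<ge>n choose 2. x k = 0)}"

end

theory Submission
  imports Defs "HOL-Homology.Homology"
begin

text \<open>Adding the segment \<open>[0, a (1, s)]\<close> to a planar convex body increases its area by \<open>a\<close> times
  its width in the direction orthogonal to \<open>(1, s)\<close>. Hence the zonotopes \<open>Z(\<alpha>)\<close>, the sums of the
  segments \<open>[0, \<alpha>(k) (1, k)]\<close> with \<open>\<alpha> \<ge> 0\<close>, have mixed areas given by the bilinear form
  \<open>B(\<alpha>, \<beta>) = (1/2) \<Sum>k l. \<alpha>(k) \<beta>(l) \<bar>k - l\<bar>\<close>. In the basis formed by the indicator of the odd
  indices and the second differences \<open>2 e(2j) - e(2j - 1) - e(2j + 1)\<close>, the form \<open>B\<close> is diagonal
  with nonzero pivots \<open>d\<close>. Taking for \<open>K(j)\<close> the zonotope of the combination of the first \<open>j + 1\<close>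
  basis vectors with coefficients \<open>c(j, 0), ..., c(j, j)\<close> (nonnegative as long as \<open>c(j, 0)\<close>
  dominates), the mixed areas \<open>V(K(i), K(j))\<close> are the entries of \<open>C diag(d) C\<^sup>T\<close>. On lower
  triangular \<open>C\<close> with positive diagonal this map is continuous and injective, hence open by
  invariance of domain, so \<open>MV(n, 2)\<close> has interior points. A continuous section of the coordinate
  projection \<open>MV(n, 2) \<rightarrow> PMV(n, 2)\<close> pulls an open subset of \<open>MV(n, 2)\<close> back to an open subset
  of \<open>PMV(n, 2)\<close>.\<close>

section \<open>Minkowski sums with segments and widths\<close>

lemma minkowski_sum_eq_plus: "minkowski_sum K L = K + L"
  unfolding minkowski_sum_def set_plus_def by blast

lemma compact_set_plus:
  fixes A B :: "'a::real_normed_vector set"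
  shows "compact A \<Longrightarrow> compact B \<Longrightarrow> compact (A + B)"
proof -
  have "A + B = {x + y |x y. x \<in> A \<and> y \<in> B}"
    by (auto simp: set_plus_def)
  then show "compact A \<Longrightarrow> compact B \<Longrightarrow> compact (A + B)"
    using compact_sums by simp
qed

lemma plus_translation:
  fixes K :: "'a::ab_semigroup_add set"
  shows "K + (+) c ` S = (+) c ` (K + S)"
proof -
  have translate: "(+) c ` X = c +o X" for X :: "'a set"
    by (auto simp: elt_set_plus_def)
  show ?thesis
    unfolding translate by (metis add.commute set_plus_rearrange3)
qed

definition dir_segment :: "real \<Rightarrow> 'a::real_vector \<Rightarrow> 'a set" where
  "dir_segment a v = (\<lambda>t. t *\<^sub>R v) ` {0..a}"

lemma mem_dir_segment: "p \<in> dir_segment a v \<longleftrightarrow> (\<exists>t. 0 \<le> t \<and> t \<le> a \<and> p = t *\<^sub>R v)"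
  unfolding dir_segment_def by auto

lemma dir_segment_memI: "0 \<le> t \<Longrightarrow> t \<le> a \<Longrightarrow> t *\<^sub>R v \<in> dir_segment a v"
  unfolding dir_segment_def by auto

lemma compact_dir_segment: "compact (dir_segment a (v::'a::real_normed_vector))"
  unfolding dir_segment_def by (intro compact_continuous_image continuous_intros) auto

lemma convex_dir_segment: "convex (dir_segment a v)"
  unfolding dir_segment_def by (intro convex_linear_image) (auto intro: linear_scaleR_left)

lemma dir_segment_0 [simp]: "dir_segment 0 v = {0}"
  by (auto simp: dir_segment_def)

lemma plus_dir_segmentE:
  assumes "p \<in> K + dir_segment a v"
  obtains k t where "k \<in> K" "0 \<le> t" "t \<le> a" "p = k + t *\<^sub>R v"
  using assms by (auto elim!: set_plus_elim simp: mem_dir_segment)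

lemma dir_segment_add:
  assumes "0 \<le> a" "0 \<le> b"
  shows "dir_segment a v + dir_segment b v = dir_segment (a + b) v"
proof (intro Set.set_eqI iffI)
  fix p assume "p \<in> dir_segment a v + dir_segment b v"
  then obtain t u where "0 \<le> t" "t \<le> a" "0 \<le> u" "u \<le> b" "p = (t + u) *\<^sub>R v"
    by (auto elim!: set_plus_elim simp: mem_dir_segment scaleR_add_left)
  then show "p \<in> dir_segment (a + b) v" by (auto intro: dir_segment_memI)
next
  fix p assume "p \<in> dir_segment (a + b) v"
  then obtain t where t: "0 \<le> t" "t \<le> a + b" "p = t *\<^sub>R v" by (auto simp: mem_dir_segment)
  then have "p = min t a *\<^sub>R v + (t - min t a) *\<^sub>R v" by (simp add: scaleR_add_left[symmetric])
  moreover have "min t a *\<^sub>R v \<in> dir_segment a v" "(t - min t a) *\<^sub>R v \<in> dir_segment b v"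
    using t assms by (auto intro!: dir_segment_memI)
  ultimately show "p \<in> dir_segment a v + dir_segment b v" by auto
qed

lemma dir_segment_split:
  assumes "0 \<le> a" "0 \<le> b"
  shows "dir_segment (a + b) v = dir_segment a v \<union> (+) (a *\<^sub>R v) ` dir_segment b v"
proof (intro Set.set_eqI iffI)
  fix p assume "p \<in> dir_segment (a + b) v"
  then obtain t where t: "0 \<le> t" "t \<le> a + b" "p = t *\<^sub>R v" by (auto simp: mem_dir_segment)
  show "p \<in> dir_segment a v \<union> (+) (a *\<^sub>R v) ` dir_segment b v"
  proof (cases "t \<le> a")
    case True then show ?thesis using t by (auto intro: dir_segment_memI)
  next
    case False
    then have "(t - a) *\<^sub>R v \<in> dir_segment b v"
      using t by (intro dir_segment_memI) auto
    moreover have "p = a *\<^sub>R v + (t - a) *\<^sub>R v"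
      using t by (simp add: scaleR_diff_left)
    ultimately show ?thesis by blast
  qed
next
  fix p assume "p \<in> dir_segment a v \<union> (+) (a *\<^sub>R v) ` dir_segment b v"
  then show "p \<in> dir_segment (a + b) v"
  proof
    assume "p \<in> dir_segment a v"
    then show ?thesis using assms by (auto simp: mem_dir_segment)
  next
    assume "p \<in> (+) (a *\<^sub>R v) ` dir_segment b v"
    then obtain t where "0 \<le> t" "t \<le> b" "p = (a + t) *\<^sub>R v"
      by (auto simp: mem_dir_segment scaleR_add_left)
    then show ?thesis using assms by (auto intro: dir_segment_memI)
  qed
qed

definition width :: "('a \<Rightarrow> real) \<Rightarrow> 'a set \<Rightarrow> real" where
  "width f K = Sup (f ` K) - Inf (f ` K)"

lemma
  fixes f :: "'a::euclidean_space \<Rightarrow> real"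
  assumes f: "linear f" and A: "compact A" "A \<noteq> {}" and B: "compact B" "B \<noteq> {}"
  shows Sup_linear_image_plus: "Sup (f ` (A + B)) = Sup (f ` A) + Sup (f ` B)"
    and Inf_linear_image_plus: "Inf (f ` (A + B)) = Inf (f ` A) + Inf (f ` B)"
proof -
  have cont: "continuous_on S f" for S
    using f by (simp add: linear_continuous_on linear_conv_bounded_linear)
  obtain a a' where a: "a \<in> A" "\<forall>y\<in>A. f y \<le> f a" and a': "a' \<in> A" "\<forall>y\<in>A. f a' \<le> f y"
    using continuous_attains_sup[OF A cont] continuous_attains_inf[OF A cont] by blast
  obtain b b' where b: "b \<in> B" "\<forall>y\<in>B. f y \<le> f b" and b': "b' \<in> B" "\<forall>y\<in>B. f b' \<le> f y"
    using continuous_attains_sup[OF B cont] continuous_attains_inf[OF B cont] by blast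
  have f_add: "f (x + y) = f x + f y" for x y
    using f by (rule linear_add)
  have sums: "f (a + b) \<in> f ` (A + B)" "f (a' + b') \<in> f ` (A + B)"
    using a b a' b' by auto
  show "Sup (f ` (A + B)) = Sup (f ` A) + Sup (f ` B)"
  proof -
    have "Sup (f ` A) = f a" "Sup (f ` B) = f b"
      using a b by (auto intro!: cSup_eq_maximum)
    moreover have "Sup (f ` (A + B)) = f (a + b)"
      using a b by (intro cSup_eq_maximum sums) (auto elim!: set_plus_elim simp: f_add add_mono)
    ultimately show ?thesis by (simp add: f_add)
  qed
  show "Inf (f ` (A + B)) = Inf (f ` A) + Inf (f ` B)"
  proof -
    have "Inf (f ` A) = f a'" "Inf (f ` B) = f b'"
      using a' b' by (auto intro!: cInf_eq_minimum)
    moreover have "Inf (f ` (A + B)) = f (a' + b')"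
      using a' b' by (intro cInf_eq_minimum sums) (auto elim!: set_plus_elim simp: f_add add_mono)
    ultimately show ?thesis by (simp add: f_add)
  qed
qed

lemma width_plus:
  fixes f :: "'a::euclidean_space \<Rightarrow> real"
  assumes "linear f" "compact A" "A \<noteq> {}" "compact B" "B \<noteq> {}"
  shows "width f (A + B) = width f A + width f B"
  using Sup_linear_image_plus[OF assms] Inf_linear_image_plus[OF assms] by (simp add: width_def)

lemma width_dir_segment:
  assumes "linear f" "0 \<le> a"
  shows "width f (dir_segment a v) = a * \<bar>f v\<bar>"
proof -
  have image: "f ` dir_segment a v = (\<lambda>t. t * f v) ` {0..a}"
    unfolding dir_segment_def image_image using assms(1) by (simp add: linear_scale)
  have "Sup ((\<lambda>t. t * f v) ` {0..a}) = max 0 (a * f v) \<and> Inf ((\<lambda>t. t * f v) ` {0..a}) = min 0 (a * f v)"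
  proof (cases "0 \<le> f v")
    case True
    have "Sup ((\<lambda>t. t * f v) ` {0..a}) = a * f v"
      using True assms(2) by (intro cSup_eq_maximum) (auto intro: mult_right_mono)
    moreover have "Inf ((\<lambda>t. t * f v) ` {0..a}) = 0"
      using True assms(2) by (intro cInf_eq_minimum) (auto intro: image_eqI[of _ _ 0])
    ultimately show ?thesis using True assms(2) by simp
  next
    case False
    have "Sup ((\<lambda>t. t * f v) ` {0..a}) = 0"
      using False assms(2) by (intro cSup_eq_maximum) (auto intro: image_eqI[of _ _ 0] simp: mult_le_0_iff)
    moreover have "Inf ((\<lambda>t. t * f v) ` {0..a}) = a * f v"
      using False assms(2) by (intro cInf_eq_minimum) (auto intro: mult_right_mono_neg)
    ultimately show ?thesis using False assms(2) by (simp add: mult_le_0_iff)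
  qed
  moreover have "max 0 x - min 0 x = \<bar>x\<bar>" for x :: real
    by auto
  ultimately show ?thesis
    unfolding width_def image using assms(2) by (simp add: abs_mult)
qed

section \<open>The area of a convex body plus a segment\<close>

lemma plus_dir_segment_inter:
  fixes K :: "'a::real_vector set"
  assumes "0 \<le> a" "0 \<le> b" "convex K"
  shows "(K + dir_segment a e) \<inter> (+) (a *\<^sub>R e) ` (K + dir_segment b e) = (+) (a *\<^sub>R e) ` K"
proof (intro Set.set_eqI iffI)
  fix p assume "p \<in> (K + dir_segment a e) \<inter> (+) (a *\<^sub>R e) ` (K + dir_segment b e)"
  then obtain k1 t1 k2 t2 where k1: "k1 \<in> K" "0 \<le> t1" "t1 \<le> a" "p = k1 + t1 *\<^sub>R e"
    and k2: "k2 \<in> K" "0 \<le> t2" "t2 \<le> b" "p = a *\<^sub>R e + (k2 + t2 *\<^sub>R e)"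
    by (auto elim!: plus_dir_segmentE)
  define d where "d = a + t2 - t1"
  have "t2 \<le> d" "k1 = k2 + d *\<^sub>R e"
    using k1 k2 by (simp_all add: d_def algebra_simps)
  \<comment> \<open>\<open>k2 + t2 e\<close> lies on the segment from \<open>k2\<close> to \<open>k1 = k2 + d e\<close>\<close>
  have "k2 + t2 *\<^sub>R e \<in> K"
  proof (cases "d = 0")
    case True then show ?thesis using \<open>t2 \<le> d\<close> k2 by auto
  next
    case False
    then have "d > 0" using \<open>t2 \<le> d\<close> k2 by auto
    have "(1 - t2 / d) *\<^sub>R k2 + (t2 / d) *\<^sub>R k1 \<in> K"
      using assms(3) k1 k2 \<open>d > 0\<close> \<open>t2 \<le> d\<close> by (intro convexD) (auto simp: field_simps)
    moreover have "(1 - t2 / d) *\<^sub>R k2 + (t2 / d) *\<^sub>R k1 = k2 + t2 *\<^sub>R e"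
      using \<open>d > 0\<close> by (simp add: \<open>k1 = k2 + d *\<^sub>R e\<close> algebra_simps)
    ultimately show ?thesis by simp
  qed
  then show "p \<in> (+) (a *\<^sub>R e) ` K" using k2 by blast
next
  fix p assume "p \<in> (+) (a *\<^sub>R e) ` K"
  then obtain k where k: "k \<in> K" "p = k + a *\<^sub>R e" by (auto simp: add.commute)
  have "p \<in> K + dir_segment a e" using k assms by (auto intro: dir_segment_memI)
  moreover have "k + 0 *\<^sub>R e \<in> K + dir_segment b e" using k assms by (intro set_plus_intro dir_segment_memI) auto
  then have "p \<in> (+) (a *\<^sub>R e) ` (K + dir_segment b e)" using k by (auto simp: add.commute)
  ultimately show "p \<in> (K + dir_segment a e) \<inter> (+) (a *\<^sub>R e) ` (K + dir_segment b e)" by blast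
qed

lemma measure_plus_dir_segment_add:
  fixes K :: "'a::euclidean_space set" and e :: 'a
  assumes "0 \<le> a" "0 \<le> b" "convex K" "compact K"
  defines "f \<equiv> \<lambda>h. measure lebesgue (K + dir_segment h e)"
  shows "f (a + b) = f a + f b - f 0"
proof -
  have meas: "K + dir_segment h e \<in> lmeasurable" for h
    by (intro lmeasurable_compact compact_set_plus compact_dir_segment assms)
  have "f (a + b) = measure lebesgue ((K + dir_segment a e) \<union> (+) (a *\<^sub>R e) ` (K + dir_segment b e))"
    unfolding f_def dir_segment_split[OF assms(1,2)] set_plus_Un plus_translation ..
  also have "\<dots> = f a + f b - f 0"
    using measure_Un3[OF meas measurable_translation[OF meas]] plus_dir_segment_inter[OF assms(1-3)]
    by (simp add: f_def measure_translation)
  finally show ?thesis .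
qed

lemma linear_image_eq_interval:
  fixes f :: "'a::euclidean_space \<Rightarrow> real"
  assumes "linear f" "compact K" "convex K" "K \<noteq> {}"
  shows "f ` K = {Inf (f ` K)..Sup (f ` K)}"
proof -
  have "compact (f ` K)"
    using assms(1,2) linear_conv_bounded_linear
    by (blast intro: compact_continuous_image linear_continuous_on)
  moreover have "connected (f ` K)"
    using assms(1,3) by (intro convex_connected convex_linear_image)
  ultimately obtain a b where ab: "f ` K = {a..b}"
    using connected_compact_interval_1[of "f ` K"] by blast
  then have "a \<le> b" using assms(4) by auto
  then show ?thesis by (simp add: ab)
qed

lemma eq_0_if_multiples_bounded:
  fixes x C :: real
  assumes "\<And>m::nat. real m * \<bar>x\<bar> \<le> C"
  shows "x = 0"
proof (rule ccontr)
  assume "x \<noteq> 0"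
  then obtain m where "C < real m * \<bar>x\<bar>"
    using ex_less_of_nat_mult[of "\<bar>x\<bar>" C] by auto
  then show False using assms[of m] by simp
qed

lemma measure_plus_dir_segment_nat_mult:
  fixes K :: "'a::euclidean_space set" and e :: 'a
  assumes "0 \<le> h" "convex K" "compact K"
  defines "f \<equiv> \<lambda>h. measure lebesgue (K + dir_segment h e)"
  shows "f (real m * h) = f 0 + real m * (f h - f 0)"
proof (induction m)
  case (Suc m)
  have "f (real (Suc m) * h) = f (real m * h) + f h - f 0"
    using measure_plus_dir_segment_add[of "real m * h" h K e] assms by (simp add: f_def algebra_simps)
  then show ?case using Suc by (simp add: algebra_simps)
qed simp

lemma measure_cbox2:
  assumes "u$1 \<le> v$1" "u$2 \<le> v$2"
  shows "measure lebesgue (cbox (u::real^2) v) = (v$1 - u$1) * (v$2 - u$2)"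
proof -
  have "cbox u v \<noteq> {}"
    using assms by (auto simp: mem_box_cart forall_2 intro!: exI[of _ u])
  then show ?thesis
    using content_cbox_cart[of u v] by (simp add: UNIV_2)
qed

lemma linear_vec_nth: "linear (\<lambda>x::real^'n. x$i)"
  by (rule bounded_linear.linear[OF bounded_linear_vec_nth])

lemma measure_plus_vertical_segment_le:
  fixes K :: "(real^2) set"
  assumes K: "compact K" "convex K" "K \<noteq> {}" and H: "0 \<le> H"
  shows "measure lebesgue (K + dir_segment H (axis 2 1)) \<le> width (\<lambda>x. x$1) K * (H + width (\<lambda>x. x$2) K)"
proof -
  define a1 where "a1 = Inf ((\<lambda>x. x$1) ` K)"
  define b1 where "b1 = Sup ((\<lambda>x. x$1) ` K)"
  define a2 where "a2 = Inf ((\<lambda>x. x$2) ` K)"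
  define b2 where "b2 = Sup ((\<lambda>x. x$2) ` K)"
  have "(\<lambda>x. x$1) ` K = {a1..b1}" "(\<lambda>x. x$2) ` K = {a2..b2}"
    unfolding a1_def b1_def a2_def b2_def by (rule linear_image_eq_interval[OF linear_vec_nth K])+
  then have "a1 \<le> b1" "a2 \<le> b2"
    using K(3) by auto
  have bounds: "a1 \<le> k$1" "k$1 \<le> b1" "a2 \<le> k$2" "k$2 \<le> b2" if "k \<in> K" for k
    using that \<open>(\<lambda>x. x$1) ` K = {a1..b1}\<close> \<open>(\<lambda>x. x$2) ` K = {a2..b2}\<close> by (auto dest: equalityD1)
  have "K + dir_segment H (axis 2 1) \<subseteq> cbox (vector [a1, a2]) (vector [b1, b2 + H])"
  proof
    fix p assume "p \<in> K + dir_segment H (axis 2 1)"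
    then obtain k t where "k \<in> K" "0 \<le> t" "t \<le> H" "p = k + t *\<^sub>R axis 2 1"
      by (rule plus_dir_segmentE)
    then show "p \<in> cbox (vector [a1, a2]) (vector [b1, b2 + H])"
      using bounds[of k] by (simp add: mem_box_cart forall_2 axis_def)
  qed
  then have "measure lebesgue (K + dir_segment H (axis 2 1))
      \<le> measure lebesgue (cbox (vector [a1, a2]) (vector [b1, b2 + H]) :: (real^2) set)"
    by (intro measure_mono_fmeasurable lmeasurable_cbox fmeasurableD lmeasurable_compact compact_set_plus
        compact_dir_segment K)
  also have "\<dots> = (b1 - a1) * (H + (b2 - a2))"
    using \<open>a1 \<le> b1\<close> \<open>a2 \<le> b2\<close> H by (subst measure_cbox2) (auto simp: algebra_simps)
  finally show ?thesis
    by (simp add: width_def a1_def b1_def a2_def b2_def)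
qed

lemma measure_plus_vertical_segment_ge:
  fixes K :: "(real^2) set"
  assumes K: "compact K" "convex K" "K \<noteq> {}" and H: "width (\<lambda>x. x$2) K \<le> H"
  shows "width (\<lambda>x. x$1) K * (H - width (\<lambda>x. x$2) K) \<le> measure lebesgue (K + dir_segment H (axis 2 1))"
proof -
  define a1 where "a1 = Inf ((\<lambda>x. x$1) ` K)"
  define b1 where "b1 = Sup ((\<lambda>x. x$1) ` K)"
  define a2 where "a2 = Inf ((\<lambda>x. x$2) ` K)"
  define b2 where "b2 = Sup ((\<lambda>x. x$2) ` K)"
  have proj1: "(\<lambda>x. x$1) ` K = {a1..b1}" and proj2: "(\<lambda>x. x$2) ` K = {a2..b2}"
    unfolding a1_def b1_def a2_def b2_def by (rule linear_image_eq_interval[OF linear_vec_nth K])+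
  then have "a1 \<le> b1"
    using K(3) by auto
  have bounds: "a2 \<le> k$2" "k$2 \<le> b2" if "k \<in> K" for k
    using that proj2 by (auto dest: equalityD1)
  have H': "b2 - a2 \<le> H"
    using H by (simp add: width_def a2_def b2_def)
  \<comment> \<open>every vertical line over the projection of \<open>K\<close> meets \<open>K\<close>, and the segment covers a height \<open>H\<close> above it\<close>
  have "cbox (vector [a1, b2]) (vector [b1, a2 + H]) \<subseteq> K + dir_segment H (axis 2 1)"
  proof
    fix p :: "real^2" assume "p \<in> cbox (vector [a1, b2]) (vector [b1, a2 + H])"
    then have p: "p$1 \<in> {a1..b1}" "b2 \<le> p$2" "p$2 \<le> a2 + H"
      by (auto simp: mem_box_cart forall_2)
    then obtain k where k: "k \<in> K" "k$1 = p$1"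
      using proj1 by (metis imageE)
    have "(p$2 - k$2) *\<^sub>R axis 2 1 \<in> dir_segment H (axis 2 1)"
      using bounds[OF k(1)] p by (intro dir_segment_memI) auto
    moreover have "p = k + (p$2 - k$2) *\<^sub>R axis 2 1"
      using k by (simp add: vec_eq_iff forall_2 axis_def)
    ultimately show "p \<in> K + dir_segment H (axis 2 1)"
      using k(1) by (metis set_plus_intro)
  qed
  then have "measure lebesgue (cbox (vector [a1, b2]) (vector [b1, a2 + H]) :: (real^2) set)
      \<le> measure lebesgue (K + dir_segment H (axis 2 1))"
    by (intro measure_mono_fmeasurable lmeasurable_cbox[THEN fmeasurableD] lmeasurable_compact compact_set_plus
        compact_dir_segment K)
  moreover have "measure lebesgue (cbox (vector [a1, b2]) (vector [b1, a2 + H]) :: (real^2) set)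
      = (b1 - a1) * (H - (b2 - a2))"
    using \<open>a1 \<le> b1\<close> H' by (subst measure_cbox2) (auto simp: algebra_simps)
  ultimately show ?thesis
    by (simp add: width_def a1_def b1_def a2_def b2_def)
qed

lemma measure_plus_vertical_segment_bounds:
  fixes K :: "(real^2) set"
  assumes K: "compact K" "convex K" "K \<noteq> {}" and H: "0 \<le> H"
  shows "\<bar>measure lebesgue (K + dir_segment H (axis 2 1)) - H * width (\<lambda>x. x$1) K\<bar>
           \<le> width (\<lambda>x. x$1) K * width (\<lambda>x. x$2) K"
proof -
  have "0 \<le> width (\<lambda>x. x$1) K"
    using linear_image_eq_interval[OF linear_vec_nth K, of 1] K(3) by (auto simp: width_def)
  then have "width (\<lambda>x. x$1) K * (H - width (\<lambda>x. x$2) K) \<le> measure lebesgue (K + dir_segment H (axis 2 1))"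
    using measure_plus_vertical_segment_ge[OF K, of H]
    by (cases "width (\<lambda>x. x$2) K \<le> H") (auto intro: order_trans[OF mult_nonneg_nonpos])
  then show ?thesis
    using measure_plus_vertical_segment_le[OF K H] by (simp add: abs_le_iff algebra_simps)
qed

lemma measure_plus_vertical_segment:
  fixes K :: "(real^2) set"
  assumes K: "compact K" "convex K" "K \<noteq> {}" and h: "0 \<le> h"
  shows "measure lebesgue (K + dir_segment h (axis 2 1)) = measure lebesgue K + h * width (\<lambda>x. x$1) K"
proof -
  define f where "f H = measure lebesgue (K + dir_segment H (axis 2 1))" for H
  define w where "w = width (\<lambda>x. x$1) K"
  define C where "C = w * width (\<lambda>x. x$2) K"
  \<comment> \<open>\<open>f\<close> grows exactly linearly along multiples of \<open>h\<close> and stays within \<open>C\<close> of \<open>H * w\<close>\<close>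
  have "f h - f 0 - h * w = 0"
  proof (rule eq_0_if_multiples_bounded)
    fix m :: nat
    have "f (real m * h) = f 0 + real m * (f h - f 0)"
      unfolding f_def using h K by (intro measure_plus_dir_segment_nat_mult) auto
    then have "real m * (f h - f 0 - h * w) = (f (real m * h) - real m * h * w) - f 0"
      by (simp add: algebra_simps)
    then have "real m * \<bar>f h - f 0 - h * w\<bar> = \<bar>(f (real m * h) - real m * h * w) - f 0\<bar>"
      by (metis abs_mult abs_of_nat)
    also have "\<dots> \<le> \<bar>f (real m * h) - real m * h * w\<bar> + f 0"
      using abs_triangle_ineq4 measure_nonneg unfolding f_def by (metis abs_of_nonneg)
    also have "\<bar>f (real m * h) - real m * h * w\<bar> \<le> C"
      using measure_plus_vertical_segment_bounds[OF K, of "real m * h"] h by (simp add: f_def w_def C_def)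
    finally show "real m * \<bar>f h - f 0 - h * w\<bar> \<le> C + f 0" by simp
  qed
  then show ?thesis by (simp add: f_def w_def)
qed

lemma linear_image_set_plus: "linear f \<Longrightarrow> f ` (A + B) = f ` A + f ` B"
  by (force simp: set_plus_def linear_add)

lemma linear_image_dir_segment: "linear f \<Longrightarrow> f ` dir_segment a v = dir_segment a (f v)"
  by (simp add: dir_segment_def image_image linear_scale)

lemma measure_plus_dir_segment:
  fixes K :: "(real^2) set"
  assumes K: "compact K" "convex K" "K \<noteq> {}" and a: "0 \<le> a"
  shows "measure lebesgue (K + dir_segment a (vector [1, s])) =
         measure lebesgue K + a * width (\<lambda>x. x$2 - s * x$1) K"
proof -
  \<comment> \<open>a shear of determinant \<open>-1\<close> sending \<open>(1, s)\<close> to the vertical unit vector\<close>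
  define L :: "real^2 \<Rightarrow> real^2" where "L x = vector [x$2 - s * x$1, x$1]" for x
  have L: "linear L"
    unfolding L_def by (rule linearI) (simp_all add: vec_eq_iff forall_2 algebra_simps)
  have det: "\<bar>det (matrix L)\<bar> = 1"
    by (simp add: det_2 matrix_def L_def axis_def)
  have "L (vector [1, s]) = axis 2 1"
    by (simp add: L_def vec_eq_iff forall_2 axis_def)
  then have image: "L ` (K + dir_segment a (vector [1, s])) = L ` K + dir_segment a (axis 2 1)"
    by (simp add: linear_image_set_plus[OF L] linear_image_dir_segment[OF L])
  have LK: "compact (L ` K)" "convex (L ` K)" "L ` K \<noteq> {}"
    using K L by (auto intro: compact_continuous_image linear_continuous_on convex_linear_image
        simp: linear_conv_bounded_linear)
  have "measure lebesgue (K + dir_segment a (vector [1, s])) = measure lebesgue (L ` K + dir_segment a (axis 2 1))"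
    using measure_linear_image[OF L, of "K + dir_segment a (vector [1, s])"] det image
    by (simp add: lmeasurable_compact compact_set_plus compact_dir_segment K)
  also have "\<dots> = measure lebesgue (L ` K) + a * width (\<lambda>x. x$1) (L ` K)"
    by (rule measure_plus_vertical_segment[OF LK a])
  also have "measure lebesgue (L ` K) = measure lebesgue K"
    using measure_linear_image[OF L lmeasurable_compact[OF K(1)]] det by simp
  also have "width (\<lambda>x. x$1) (L ` K) = width (\<lambda>x. x$2 - s * x$1) K"
    by (simp add: width_def image_image L_def)
  finally show ?thesis .
qed

section \<open>Mixed areas of zonotopes\<close>

fun zonotope :: "(nat \<Rightarrow> real) \<Rightarrow> nat \<Rightarrow> (real^2) set" where
  "zonotope \<alpha> 0 = {0}"
| "zonotope \<alpha> (Suc m) = zonotope \<alpha> m + dir_segment (\<alpha> m) (vector [1, real m])"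

lemma compact_zonotope: "compact (zonotope \<alpha> m)"
  by (induction m) (simp_all add: compact_set_plus compact_dir_segment)

lemma convex_zonotope: "convex (zonotope \<alpha> m)"
  by (induction m) (simp_all add: convex_set_plus convex_dir_segment)

lemma zero_in_zonotope: "\<forall>k<m. 0 \<le> \<alpha> k \<Longrightarrow> 0 \<in> zonotope \<alpha> m"
proof (induction m)
  case (Suc m)
  then have "0 + 0 *\<^sub>R vector [1, real m] \<in> zonotope \<alpha> (Suc m)"
    by (simp only: zonotope.simps) (intro set_plus_intro dir_segment_memI; simp)
  then show ?case by simp
qed simp

lemma convex_body2_zonotope: "\<forall>k<m. 0 \<le> \<alpha> k \<Longrightarrow> convex_body2 (zonotope \<alpha> m)"
  using compact_zonotope convex_zonotope zero_in_zonotope unfolding convex_body2_def by blast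

lemma width_zonotope:
  assumes "\<forall>k<m. 0 \<le> \<alpha> k"
  shows "width (\<lambda>x. x$2 - s * x$1) (zonotope \<alpha> m) = (\<Sum>k<m. \<alpha> k * \<bar>real k - s\<bar>)"
  using assms
proof (induction m)
  case 0
  then show ?case by (simp add: width_def)
next
  case (Suc m)
  define \<phi> :: "real^2 \<Rightarrow> real" where "\<phi> x = x$2 - s * x$1" for x
  have lin: "linear \<phi>"
    unfolding \<phi>_def by (rule linearI) (simp_all add: algebra_simps)
  have "width \<phi> (zonotope \<alpha> (Suc m)) = width \<phi> (zonotope \<alpha> m) + width \<phi> (dir_segment (\<alpha> m) (vector [1, real m]))"
    using Suc.prems zero_in_zonotope[of m \<alpha>] dir_segment_memI[of 0 "\<alpha> m" "vector [1, real m]"]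
    by (simp only: zonotope.simps, intro width_plus[OF lin] compact_zonotope compact_dir_segment) auto
  also have "\<dots> = width \<phi> (zonotope \<alpha> m) + \<alpha> m * \<bar>real m - s\<bar>"
    using Suc.prems by (simp add: width_dir_segment[OF lin] \<phi>_def)
  finally show ?case using Suc by (simp add: \<phi>_def[abs_def])
qed

definition mixed_form :: "nat \<Rightarrow> (nat \<Rightarrow> real) \<Rightarrow> (nat \<Rightarrow> real) \<Rightarrow> real" where
  "mixed_form m \<alpha> \<beta> = (\<Sum>k<m. \<Sum>l<m. \<alpha> k * \<beta> l * \<bar>real k - real l\<bar>) / 2"

lemma mixed_form_commute: "mixed_form m \<alpha> \<beta> = mixed_form m \<beta> \<alpha>"
  unfolding mixed_form_def by (subst sum.swap) (simp add: abs_minus_commute mult_ac)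

lemma mixed_form_add_left:
  "mixed_form m (\<lambda>k. \<alpha> k + \<beta> k) \<gamma> = mixed_form m \<alpha> \<gamma> + mixed_form m \<beta> \<gamma>"
  unfolding mixed_form_def by (simp add: distrib_right sum.distrib add_divide_distrib)

lemma mixed_form_scale_left: "mixed_form M (\<lambda>k. c * \<alpha> k) \<beta> = c * mixed_form M \<alpha> \<beta>"
  unfolding mixed_form_def by (simp add: sum_distrib_left mult_ac)

lemma mixed_form_sum_left:
  assumes "finite S"
  shows "mixed_form M (\<lambda>k. \<Sum>s\<in>S. a s * f s k) \<beta> = (\<Sum>s\<in>S. a s * mixed_form M (f s) \<beta>)"
  using assms
proof (induction S rule: finite_induct)
  case empty
  then show ?case by (simp add: mixed_form_def)
next
  case (insert s S)
  then have "mixed_form M (\<lambda>k. \<Sum>s\<in>insert s S. a s * f s k) \<beta>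
      = mixed_form M (\<lambda>k. a s * f s k) \<beta> + mixed_form M (\<lambda>k. \<Sum>s\<in>S. a s * f s k) \<beta>"
    by (simp add: mixed_form_add_left)
  then show ?case
    using insert by (simp add: mixed_form_scale_left)
qed

lemma mixed_form_sum_right:
  "finite S \<Longrightarrow> mixed_form M \<beta> (\<lambda>k. \<Sum>s\<in>S. a s * f s k) = (\<Sum>s\<in>S. a s * mixed_form M \<beta> (f s))"
  using mixed_form_sum_left by (simp add: mixed_form_commute)

lemma mixed_form_Suc_diag:
  "mixed_form (Suc m) \<alpha> \<alpha> = mixed_form m \<alpha> \<alpha> + \<alpha> m * (\<Sum>k<m. \<alpha> k * \<bar>real k - real m\<bar>)"
proof -
  have "(\<Sum>k<Suc m. \<Sum>l<Suc m. \<alpha> k * \<alpha> l * \<bar>real k - real l\<bar>)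
      = (\<Sum>k<m. \<Sum>l<m. \<alpha> k * \<alpha> l * \<bar>real k - real l\<bar>) + (\<Sum>k<m. \<alpha> k * \<alpha> m * \<bar>real k - real m\<bar>)
        + (\<Sum>l<m. \<alpha> m * \<alpha> l * \<bar>real m - real l\<bar>)"
    by (simp add: sum.distrib)
  also have "(\<Sum>l<m. \<alpha> m * \<alpha> l * \<bar>real m - real l\<bar>) = (\<Sum>k<m. \<alpha> k * \<alpha> m * \<bar>real k - real m\<bar>)"
    by (intro sum.cong) (auto simp: abs_minus_commute)
  finally show ?thesis
    unfolding mixed_form_def by (simp add: sum_distrib_left algebra_simps)
qed

lemma measure_zonotope:
  "\<forall>k<m. 0 \<le> \<alpha> k \<Longrightarrow> measure lebesgue (zonotope \<alpha> m) = mixed_form m \<alpha> \<alpha>"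
proof (induction m)
  case 0
  then show ?case by (simp add: mixed_form_def)
next
  case (Suc m)
  have "measure lebesgue (zonotope \<alpha> (Suc m))
      = measure lebesgue (zonotope \<alpha> m) + \<alpha> m * width (\<lambda>x. x$2 - real m * x$1) (zonotope \<alpha> m)"
    using Suc.prems zero_in_zonotope[of m \<alpha>]
    by (simp only: zonotope.simps, intro measure_plus_dir_segment compact_zonotope convex_zonotope) auto
  then show ?case
    using Suc by (simp add: width_zonotope mixed_form_Suc_diag)
qed

lemma zonotope_plus:
  assumes "\<forall>k<m. 0 \<le> \<alpha> k" "\<forall>k<m. 0 \<le> \<beta> k"
  shows "zonotope \<alpha> m + zonotope \<beta> m = zonotope (\<lambda>k. \<alpha> k + \<beta> k) m"
  using assms
proof (induction m)
  case (Suc m)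
  then have "zonotope (\<lambda>k. \<alpha> k + \<beta> k) (Suc m) = (zonotope \<alpha> m + zonotope \<beta> m)
      + (dir_segment (\<alpha> m) (vector [1, real m]) + dir_segment (\<beta> m) (vector [1, real m]))"
    by (simp add: dir_segment_add)
  then show ?case by (simp add: ac_simps)
qed simp

lemma mixed_area_zonotope:
  assumes "\<forall>k<m. 0 \<le> \<alpha> k" "\<forall>k<m. 0 \<le> \<beta> k"
  shows "mixed_area (zonotope \<alpha> m) (zonotope \<beta> m) = mixed_form m \<alpha> \<beta>"
proof -
  have "mixed_form m (\<lambda>k. \<alpha> k + \<beta> k) (\<lambda>k. \<alpha> k + \<beta> k)
      = mixed_form m \<alpha> \<alpha> + 2 * mixed_form m \<alpha> \<beta> + mixed_form m \<beta> \<beta>"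
    by (simp add: mixed_form_add_left mixed_form_commute[of m _ "\<lambda>k. \<alpha> k + \<beta> k"] mixed_form_commute[of m \<beta> \<alpha>])
  then show ?thesis
    using assms unfolding mixed_area_def vol2_def minkowski_sum_eq_plus
    by (simp add: zonotope_plus measure_zonotope)
qed

section \<open>A basis diagonalising the mixed form\<close>

text \<open>\<open>mixed_form\<close> is diagonal in these vectors: the second difference in \<open>k\<close> of \<open>\<bar>k - l\<bar>\<close> is
  \<open>-2\<close> at \<open>k = l\<close> and \<open>0\<close> elsewhere, and \<open>orth_vec 0\<close> vanishes at every even index.\<close>

definition orth_vec :: "nat \<Rightarrow> nat \<Rightarrow> real" where
  "orth_vec j k = (if j = 0 then (if odd k then 1 else 0)
     else if k = 2 * j then 2 else if k + 1 = 2 * j \<or> k = 2 * j + 1 then -1 else 0)"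

lemma sum_orth_vec:
  assumes "1 \<le> j" "2 * j + 1 < M"
  shows "(\<Sum>k<M. orth_vec j k * g k) = 2 * g (2 * j) - g (2 * j - 1) - g (2 * j + 1)"
proof -
  have "orth_vec j k * g k = (if k = 2 * j then 2 * g k else 0) + (if k = 2 * j - 1 then - g k else 0)
      + (if k = 2 * j + 1 then - g k else 0)" for k
    using assms(1) by (auto simp: orth_vec_def)
  then show ?thesis
    using assms by (simp add: sum.distrib)
qed

lemma second_difference_abs:
  assumes "1 \<le> j"
  shows "2 * \<bar>real (2 * j) - real l\<bar> - \<bar>real (2 * j - 1) - real l\<bar> - \<bar>real (2 * j + 1) - real l\<bar>
    = (if l = 2 * j then -2 else 0)"
proof -
  have "real (2 * j - 1) = real (2 * j) - 1"
    using assms by simp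
  moreover consider "l + 1 \<le> 2 * j" | "l = 2 * j" | "2 * j + 1 \<le> l"
    by linarith
  ultimately show ?thesis
    by cases (auto simp: abs_if dest!: of_nat_mono[where 'a = real])
qed

lemma mixed_form_orth_vec_left:
  assumes "1 \<le> j" "2 * j + 1 < M"
  shows "mixed_form M (orth_vec j) \<beta> = - \<beta> (2 * j)"
proof -
  have "(\<Sum>k<M. \<Sum>l<M. orth_vec j k * \<beta> l * \<bar>real k - real l\<bar>)
      = (\<Sum>l<M. \<beta> l * (\<Sum>k<M. orth_vec j k * \<bar>real k - real l\<bar>))"
    by (subst sum.swap) (simp add: sum_distrib_left mult_ac)
  also have "\<dots> = (\<Sum>l<M. \<beta> l * (if l = 2 * j then -2 else 0))"
    by (intro sum.cong refl) (simp only: sum_orth_vec[OF assms] second_difference_abs[OF assms(1)])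
  also have "\<dots> = - 2 * \<beta> (2 * j)"
    using assms by (simp add: if_distrib[of "\<lambda>x. _ * x"] cong: if_cong)
  finally show ?thesis
    unfolding mixed_form_def by simp
qed

definition orth_pivot :: "nat \<Rightarrow> nat \<Rightarrow> real" where
  "orth_pivot M l = (if l = 0 then mixed_form M (orth_vec 0) (orth_vec 0) else -2)"

lemma mixed_form_orth_vec:
  assumes "2 * l + 1 < M" "2 * m + 1 < M"
  shows "mixed_form M (orth_vec l) (orth_vec m) = (if l = m then orth_pivot M l else 0)"
proof (cases "l = 0")
  case True
  show ?thesis
  proof (cases "m = 0")
    case False
    then have "mixed_form M (orth_vec l) (orth_vec m) = - orth_vec 0 (2 * m)"
      using assms \<open>l = 0\<close> by (subst mixed_form_commute) (simp add: mixed_form_orth_vec_left)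
    then show ?thesis using False \<open>l = 0\<close> by (simp add: orth_vec_def)
  qed (simp add: \<open>l = 0\<close> orth_pivot_def)
next
  case False
  then show ?thesis
    using assms by (auto simp: mixed_form_orth_vec_left orth_vec_def orth_pivot_def)
qed

lemma orth_pivot_0_pos:
  assumes "2 \<le> n"
  shows "0 < orth_pivot (2 * n) 0"
proof -
  let ?g = "\<lambda>k l. orth_vec 0 k * orth_vec 0 l * \<bar>real k - real l\<bar>"
  have nonneg: "0 \<le> ?g k l" for k l
    by (simp add: orth_vec_def)
  have "?g 1 3 \<le> (\<Sum>l<2 * n. ?g 1 l)"
    using assms by (intro member_le_sum nonneg) auto
  also have "\<dots> \<le> (\<Sum>k<2 * n. \<Sum>l<2 * n. ?g k l)"
    using assms by (intro member_le_sum[where f = "\<lambda>k. \<Sum>l<2 * n. ?g k l"] sum_nonneg nonneg) auto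
  finally show ?thesis
    by (simp add: orth_pivot_def mixed_form_def orth_vec_def)
qed

lemma orth_pivot_nonzero: "2 \<le> n \<Longrightarrow> orth_pivot (2 * n) l \<noteq> 0"
  using orth_pivot_0_pos[of n] by (auto simp: orth_pivot_def)

definition orth_comb :: "(nat \<Rightarrow> nat \<Rightarrow> real) \<Rightarrow> nat \<Rightarrow> nat \<Rightarrow> real" where
  "orth_comb c j k = (\<Sum>l\<le>j. c j l * orth_vec l k)"

definition ldl_entry :: "(nat \<Rightarrow> nat \<Rightarrow> real) \<Rightarrow> (nat \<Rightarrow> real) \<Rightarrow> nat \<Rightarrow> nat \<Rightarrow> real" where
  "ldl_entry c p i j = (\<Sum>l\<le>i. c i l * c j l * p l)"

lemma mixed_form_orth_comb:
  assumes "i \<le> j" "j < n"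
  shows "mixed_form (2 * n) (orth_comb c i) (orth_comb c j) = ldl_entry c (orth_pivot (2 * n)) i j"
proof -
  have "mixed_form (2 * n) (orth_comb c i) (orth_comb c j)
      = (\<Sum>l\<le>i. c i l * (\<Sum>m\<le>j. c j m * mixed_form (2 * n) (orth_vec l) (orth_vec m)))"
    unfolding orth_comb_def by (simp add: mixed_form_sum_left mixed_form_sum_right)
  also have "\<dots> = (\<Sum>l\<le>i. c i l * (\<Sum>m\<le>j. c j m * (if l = m then orth_pivot (2 * n) l else 0)))"
    using assms by (intro sum.cong refl arg_cong2[where f = "(*)"]) (auto simp: mixed_form_orth_vec)
  also have "\<dots> = ldl_entry c (orth_pivot (2 * n)) i j"
    using assms unfolding ldl_entry_def
    by (intro sum.cong refl) (auto simp: if_distrib[of "\<lambda>x. c j _ * x"] cong: if_cong)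
  finally show ?thesis .
qed

lemma orth_comb_nonneg:
  assumes "\<forall>l\<in>{1..j}. 0 \<le> c j l" "(\<Sum>l\<in>{1..j}. c j l) \<le> c j 0"
  shows "0 \<le> orth_comb c j k"
proof -
  have split: "orth_comb c j k = c j 0 * orth_vec 0 k + (\<Sum>l\<in>{1..j}. c j l * orth_vec l k)"
    unfolding orth_comb_def atMost_atLeast0 by (simp add: sum.atLeast_Suc_atMost)
  show ?thesis
  proof (cases "even k")
    case True
    have "0 \<le> (\<Sum>l\<in>{1..j}. c j l * orth_vec l k)"
    proof (intro sum_nonneg mult_nonneg_nonneg)
      fix l assume "l \<in> {1..j}"
      have "k + 1 \<noteq> 2 * l" "k \<noteq> 2 * l + 1"
        using True by presburger+
      then show "0 \<le> c j l" "0 \<le> orth_vec l k"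
        using assms(1) \<open>l \<in> {1..j}\<close> by (auto simp: orth_vec_def)
    qed
    then show ?thesis using True split by (simp add: orth_vec_def)
  next
    case False
    \<comment> \<open>at odd \<open>k\<close> every \<open>orth_vec l\<close> with \<open>l \<ge> 1\<close> is \<open>\<ge> -1\<close>, and \<open>orth_vec 0 k = 1\<close>\<close>
    have "- (\<Sum>l\<in>{1..j}. c j l) \<le> (\<Sum>l\<in>{1..j}. c j l * orth_vec l k)"
      unfolding sum_negf[symmetric] using assms(1)
      by (intro sum_mono) (auto simp: orth_vec_def)
    then show ?thesis using False split assms(2) by (simp add: orth_vec_def)
  qed
qed

lemma mixed_areas_realise_ldl:
  assumes "\<forall>j<n. \<forall>l\<in>{1..j}. 0 \<le> c j l" "\<forall>j<n. (\<Sum>l\<in>{1..j}. c j l) \<le> c j 0"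
  shows "\<exists>K. (\<forall>i<n. convex_body2 (K i)) \<and>
    (\<forall>i j. i \<le> j \<and> j < n \<longrightarrow> mixed_area (K i) (K j) = ldl_entry c (orth_pivot (2 * n)) i j)"
proof (intro exI conjI allI impI)
  have nonneg: "\<forall>k<2 * n. 0 \<le> orth_comb c j k" if "j < n" for j
    using assms that by (auto intro: orth_comb_nonneg)
  show "convex_body2 (zonotope (orth_comb c i) (2 * n))" if "i < n" for i
    using nonneg that by (intro convex_body2_zonotope) auto
  show "mixed_area (zonotope (orth_comb c i) (2 * n)) (zonotope (orth_comb c j) (2 * n))
      = ldl_entry c (orth_pivot (2 * n)) i j" if "i \<le> j \<and> j < n" for i j
    using nonneg that by (simp add: mixed_area_zonotope mixed_form_orth_comb)
qed

lemma ldl_entry_unique: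
  fixes c c' :: "nat \<Rightarrow> nat \<Rightarrow> real"
  assumes p: "\<forall>l<n. p l \<noteq> 0" and diag: "\<forall>j<n. 0 < c j j" "\<forall>j<n. 0 < c' j j"
    and eq: "\<forall>i j. i \<le> j \<and> j < n \<longrightarrow> ldl_entry c p i j = ldl_entry c' p i j"
  shows "l \<le> j \<Longrightarrow> j < n \<Longrightarrow> c j l = c' j l"
proof (induction l arbitrary: j rule: less_induct)
  case (less i)
  \<comment> \<open>column \<open>i\<close>: the entries \<open>(i, j)\<close> agree in all terms but the last\<close>
  have last: "c i i * c j i * p i = c' i i * c' j i * p i" if "i \<le> j" "j < n" for j
  proof -
    have "(\<Sum>l<i. c i l * c j l * p l) = (\<Sum>l<i. c' i l * c' j l * p l)"
      using less.IH that by (intro sum.cong refl) auto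
    moreover have "ldl_entry c p i j = ldl_entry c' p i j"
      using eq that by blast
    ultimately show ?thesis
      by (simp add: ldl_entry_def lessThan_Suc_atMost[symmetric])
  qed
  have "i < n" using less by simp
  then have "(c i i)\<^sup>2 = (c' i i)\<^sup>2"
    using last[of i] p by (simp add: power2_eq_square)
  then have "c i i = c' i i"
    using diag \<open>i < n\<close> by (simp add: less_imp_le)
  moreover have "c i i \<noteq> 0" "p i \<noteq> 0"
    using diag p \<open>i < n\<close> by auto
  ultimately show ?case
    using last[of j] less.prems by simp
qed

section \<open>Triangular coordinates\<close>

definition tri_index :: "nat \<Rightarrow> nat \<Rightarrow> nat" where
  "tri_index i j = j * (j + 1) div 2 + i"

lemma tri_index_0_Suc: "tri_index 0 (Suc j) = tri_index 0 j + Suc j"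
proof -
  have "Suc j * (Suc j + 1) = j * (j + 1) + 2 * Suc j"
    by (simp add: algebra_simps)
  then show ?thesis
    unfolding tri_index_def by simp
qed

lemma tri_index_0_mono: "j \<le> j' \<Longrightarrow> tri_index 0 j \<le> tri_index 0 j'"
  unfolding tri_index_def by (intro add_mono div_le_mono mult_le_mono) auto

lemma tri_index_less_Suc: "i \<le> j \<Longrightarrow> tri_index i j < tri_index 0 (Suc j)"
  by (simp add: tri_index_0_Suc) (simp add: tri_index_def)

lemma tri_index_0_eq_choose: "tri_index 0 n = (n + 1) choose 2"
  unfolding tri_index_def choose_two by (simp add: mult.commute)

lemma tri_index_less:
  assumes "i \<le> j" "j < n"
  shows "tri_index i j < (n + 1) choose 2"
proof -
  have "tri_index i j < tri_index 0 (Suc j)"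
    using assms(1) by (rule tri_index_less_Suc)
  also have "\<dots> \<le> tri_index 0 n"
    using assms(2) by (intro tri_index_0_mono) simp
  finally show ?thesis by (simp add: tri_index_0_eq_choose)
qed

lemma tri_index_inj:
  assumes "i \<le> j" "i' \<le> j'" "tri_index i j = tri_index i' j'"
  shows "i = i' \<and> j = j'"
proof -
  have "\<not> j < j'" if "i \<le> j" "tri_index i j = tri_index i' j'" for i j i' j'
  proof
    assume "j < j'"
    then have "tri_index 0 (Suc j) \<le> tri_index 0 j'"
      by (intro tri_index_0_mono) simp
    also have "\<dots> \<le> tri_index i' j'"
      by (simp add: tri_index_def)
    finally show False
      using tri_index_less_Suc[OF that(1)] that(2) by simp
  qed
  then have "j = j'"
    using assms by (metis linorder_neqE_nat)
  then show ?thesis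
    using assms(3) by (simp add: tri_index_def)
qed

lemma tri_index_surj:
  "k < (n + 1) choose 2 \<Longrightarrow> \<exists>i j. i \<le> j \<and> j < n \<and> k = tri_index i j"
proof (induction n)
  case 0
  then show ?case by (simp add: choose_two)
next
  case (Suc n)
  show ?case
  proof (cases "k < (n + 1) choose 2")
    case True
    then show ?thesis using Suc.IH by (meson less_SucI)
  next
    case False
    then have "tri_index 0 n \<le> k" "k < tri_index 0 n + Suc n"
      using Suc.prems tri_index_0_eq_choose[of n] tri_index_0_eq_choose[of "Suc n"] tri_index_0_Suc[of n]
      by simp_all
    then show ?thesis
      by (intro exI[of _ "k - tri_index 0 n"] exI[of _ n]) (auto simp: tri_index_def)
  qed
qed

definition tri_vec :: "nat \<Rightarrow> (nat \<Rightarrow> nat \<Rightarrow> real) \<Rightarrow> nat \<Rightarrow> real" where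
  "tri_vec n a k = (\<Sum>j<n. \<Sum>i\<le>j. if k = tri_index i j then a i j else 0)"

lemma tri_vec_tri_index:
  assumes "i \<le> j" "j < n"
  shows "tri_vec n a (tri_index i j) = a i j"
proof -
  have "(if tri_index i j = tri_index i' j' then a i' j' else 0) = (if j' = j \<and> i' = i then a i j else 0)"
    if "i' \<le> j'" for i' j'
    using tri_index_inj[OF assms(1) that] by auto
  then have "tri_vec n a (tri_index i j) = (\<Sum>j'<n. \<Sum>i'\<le>j'. if j' = j \<and> i' = i then a i j else 0)"
    unfolding tri_vec_def by (intro sum.cong refl) auto
  also have "\<dots> = (\<Sum>j'<n. if j' = j then a i j else 0)"
    using assms(1) by (intro sum.cong refl) (auto split: if_splits)
  also have "\<dots> = a i j"
    using assms(2) by simp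
  finally show ?thesis .
qed

lemma tri_vec_cong:
  "(\<And>i j. i \<le> j \<Longrightarrow> j < n \<Longrightarrow> a i j = b i j) \<Longrightarrow> tri_vec n a = tri_vec n b"
  unfolding tri_vec_def by (intro ext sum.cong refl) auto

lemma tri_vec_eq_0: "(n + 1) choose 2 \<le> k \<Longrightarrow> tri_vec n a k = 0"
  unfolding tri_vec_def by (intro sum.neutral ballI) (auto dest: tri_index_less)

lemma tri_vec_eta:
  assumes "x \<in> topspace (Euclidean_space ((n + 1) choose 2))"
  shows "tri_vec n (\<lambda>i j. x (tri_index i j)) = x"
proof
  fix k
  show "tri_vec n (\<lambda>i j. x (tri_index i j)) k = x k"
  proof (cases "k < (n + 1) choose 2")
    case True
    then obtain i j where "i \<le> j" "j < n" "k = tri_index i j"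
      using tri_index_surj by blast
    then show ?thesis by (simp add: tri_vec_tri_index)
  next
    case False
    then show ?thesis using assms by (simp add: tri_vec_eq_0 topspace_Euclidean_space)
  qed
qed

lemma continuous_on_tri_vec:
  assumes "\<And>i j. continuous_on S (\<lambda>x. a x i j)"
  shows "continuous_on S (\<lambda>x. tri_vec n (a x) k)"
  unfolding tri_vec_def
proof (intro continuous_on_sum)
  fix i j
  show "continuous_on S (\<lambda>x. if k = tri_index i j then a x i j else 0)"
    using assms by (cases "k = tri_index i j") simp_all
qed

section \<open>Invariance of domain\<close>

lemma continuous_on_coordinate [continuous_intros]: "continuous_on S (\<lambda>x::nat \<Rightarrow> real. x k)"
  using continuous_on_subset[of UNIV "\<lambda>x::nat \<Rightarrow> real. x k"] by simp

lemma continuous_map_Euclidean_spaceI: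
  assumes "\<And>k. continuous_on UNIV (\<lambda>x. F x k)" "\<And>x k. N \<le> k \<Longrightarrow> F x k = 0"
  shows "continuous_map (subtopology (Euclidean_space M) U) (Euclidean_space N) F"
proof -
  have "F = (\<lambda>x k. if k < N then F x k else 0)"
    using assms(2) by (auto simp: fun_eq_iff)
  moreover have "continuous_map (subtopology (Euclidean_space M) U) euclidean (\<lambda>x. F x k)" for k
  proof -
    have "continuous_map (powertop_real UNIV) euclidean (\<lambda>x. F x k)"
      using assms(1) by (simp add: euclidean_product_topology)
    then show ?thesis
      unfolding Euclidean_space_def subtopology_subtopology by (rule continuous_map_from_subtopology)
  qed
  ultimately show ?thesis
    by (metis continuous_map_componentwise_Euclidean_space)
qed

lemma Euclidean_space_interior_of_nonempty:
  fixes F :: "(nat \<Rightarrow> real) \<Rightarrow> nat \<Rightarrow> real"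
  assumes V: "open V" "x0 \<in> V" "x0 \<in> topspace (Euclidean_space N)"
    and F: "\<And>k. continuous_on UNIV (\<lambda>x. F x k)" "\<And>x k. N \<le> k \<Longrightarrow> F x k = 0"
    and inj: "inj_on F (topspace (Euclidean_space N) \<inter> V)"
    and image: "F ` (topspace (Euclidean_space N) \<inter> V) \<subseteq> S"
  shows "Euclidean_space N interior_of S \<noteq> {}"
proof -
  define U where "U = topspace (Euclidean_space N) \<inter> V"
  have "openin (Euclidean_space N) U"
    unfolding U_def Euclidean_space_def openin_subtopology topspace_subtopology
    using V(1) by (auto simp: euclidean_product_topology)
  then have "openin (Euclidean_space N) (F ` U)"
    using inj by (intro invariance_of_domain_Euclidean_space continuous_map_Euclidean_spaceI F) (auto simp: U_def)
  then have "F ` U \<subseteq> Euclidean_space N interior_of S"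
    using image by (simp add: interior_of_maximal U_def)
  moreover have "F x0 \<in> F ` U"
    using V by (simp add: U_def)
  ultimately show ?thesis by blast
qed

section \<open>Interior points of the configuration spaces\<close>

text \<open>A point \<open>x\<close> of \<open>\<real>\<^bsup>(n+1) choose 2\<^esup>\<close> is read as the lower triangular array \<open>tri_entry x\<close>; its
  rows are the coefficients of the zonotopes below.\<close>

definition tri_entry :: "(nat \<Rightarrow> real) \<Rightarrow> nat \<Rightarrow> nat \<Rightarrow> real" where
  "tri_entry x j l = x (tri_index l j)"

definition ldl_coords :: "nat \<Rightarrow> (nat \<Rightarrow> real) \<Rightarrow> nat \<Rightarrow> real" where
  "ldl_coords n x = tri_vec n (ldl_entry (tri_entry x) (orth_pivot (2 * n)))"

definition ldl_domain :: "nat \<Rightarrow> (nat \<Rightarrow> real) set" where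
  "ldl_domain n = {x. \<forall>j<n. (\<forall>l\<le>j. 0 < tri_entry x j l) \<and> (\<Sum>l\<in>{1..j}. tri_entry x j l) < tri_entry x j 0}"

lemma open_ldl_domain: "open (ldl_domain n)"
proof -
  have "ldl_domain n = (\<Inter>j<n. (\<Inter>l\<le>j. {x. 0 < x (tri_index l j)})
      \<inter> {x. (\<Sum>l\<in>{1..j}. x (tri_index l j)) < x (tri_index 0 j)})"
    by (auto simp: ldl_domain_def tri_entry_def)
  also have "open \<dots>"
    by (intro open_INT open_Int finite_lessThan finite_atMost ballI open_Collect_less continuous_intros)
  finally show ?thesis .
qed

lemma tri_vec_in_ldl_domain: "tri_vec n (\<lambda>l j. if l = 0 then real n else 1) \<in> ldl_domain n"
proof -
  have entry: "tri_entry (tri_vec n (\<lambda>l j. if l = 0 then real n else 1)) j l = (if l = 0 then real n else 1)"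
    if "l \<le> j" "j < n" for j l
    using that by (simp add: tri_entry_def tri_vec_tri_index)
  then have "(\<Sum>l\<in>{1..j}. tri_entry (tri_vec n (\<lambda>l j. if l = 0 then real n else 1)) j l) < real n" if "j < n" for j
    using that by simp
  then show ?thesis
    using entry by (auto simp: ldl_domain_def)
qed

lemma inj_on_ldl_coords:
  assumes "2 \<le> n"
  shows "inj_on (ldl_coords n) (topspace (Euclidean_space ((n + 1) choose 2)) \<inter> ldl_domain n)"
proof (rule inj_onI)
  fix x y assume x: "x \<in> topspace (Euclidean_space ((n + 1) choose 2)) \<inter> ldl_domain n"
    and y: "y \<in> topspace (Euclidean_space ((n + 1) choose 2)) \<inter> ldl_domain n"
    and "ldl_coords n x = ldl_coords n y"
  have "ldl_entry (tri_entry x) (orth_pivot (2 * n)) i j = ldl_entry (tri_entry y) (orth_pivot (2 * n)) i j"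
    if "i \<le> j" "j < n" for i j
    using fun_cong[OF \<open>ldl_coords n x = ldl_coords n y\<close>, of "tri_index i j"] that
    by (simp add: ldl_coords_def tri_vec_tri_index)
  moreover have "\<forall>j<n. 0 < tri_entry x j j" "\<forall>j<n. 0 < tri_entry y j j"
    using x y by (simp_all add: ldl_domain_def)
  ultimately have "tri_entry x j i = tri_entry y j i" if "i \<le> j" "j < n" for i j
    using ldl_entry_unique[of n "orth_pivot (2 * n)" "tri_entry x" "tri_entry y" i j] that assms
    by (simp add: orth_pivot_nonzero)
  then have "tri_vec n (\<lambda>i j. x (tri_index i j)) = tri_vec n (\<lambda>i j. y (tri_index i j))"
    by (intro tri_vec_cong) (simp add: tri_entry_def)
  then show "x = y"
    using x y by (simp add: tri_vec_eta)
qed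

lemma ldl_coords_in_MV:
  assumes "x \<in> ldl_domain n"
  shows "ldl_coords n x \<in> MV n"
proof -
  have "\<forall>j<n. \<forall>l\<in>{1..j}. 0 \<le> tri_entry x j l" "\<forall>j<n. (\<Sum>l\<in>{1..j}. tri_entry x j l) \<le> tri_entry x j 0"
    using assms by (auto simp: ldl_domain_def less_imp_le)
  then obtain K where K: "\<forall>i<n. convex_body2 (K i)"
    "\<forall>i j. i \<le> j \<and> j < n \<longrightarrow> mixed_area (K i) (K j) = ldl_entry (tri_entry x) (orth_pivot (2 * n)) i j"
    by (blast dest: mixed_areas_realise_ldl)
  show ?thesis
    unfolding MV_def
  proof (intro CollectI exI[of _ K] conjI allI impI)
    show "convex_body2 (K i)" if "i < n" for i
      using K that by blast
    show "ldl_coords n x (j * (j + 1) div 2 + i) = mixed_area (K i) (K j)" if "i \<le> j \<and> j < n" for i j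
      using K that tri_vec_tri_index[of i j n] unfolding ldl_coords_def tri_index_def by simp
    show "ldl_coords n x k = 0" if "(n + 1) choose 2 \<le> k" for k
      using that unfolding ldl_coords_def by (rule tri_vec_eq_0)
  qed
qed

lemma interior_MV_nonempty:
  assumes "2 \<le> n"
  shows "Euclidean_space ((n + 1) choose 2) interior_of MV n \<noteq> {}"
proof (rule Euclidean_space_interior_of_nonempty)
  show "open (ldl_domain n)"
    by (rule open_ldl_domain)
  show "tri_vec n (\<lambda>l j. if l = 0 then real n else 1) \<in> ldl_domain n"
    by (rule tri_vec_in_ldl_domain)
  show "tri_vec n (\<lambda>l j. if l = 0 then real n else 1) \<in> topspace (Euclidean_space ((n + 1) choose 2))"
    by (simp add: topspace_Euclidean_space tri_vec_eq_0)
  show "continuous_on UNIV (\<lambda>x. ldl_coords n x k)" for k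
    unfolding ldl_coords_def ldl_entry_def tri_entry_def by (intro continuous_on_tri_vec continuous_intros)
  show "ldl_coords n x k = 0" if "(n + 1) choose 2 \<le> k" for x k
    using that unfolding ldl_coords_def by (rule tri_vec_eq_0)
  show "inj_on (ldl_coords n) (topspace (Euclidean_space ((n + 1) choose 2)) \<inter> ldl_domain n)"
    using assms by (rule inj_on_ldl_coords)
  show "ldl_coords n ` (topspace (Euclidean_space ((n + 1) choose 2)) \<inter> ldl_domain n) \<subseteq> MV n"
    by (auto intro: ldl_coords_in_MV)
qed

lemma interior_of_nonempty_by_section:
  assumes "continuous_map X Y s" "y0 \<in> topspace X" "s y0 \<in> Y interior_of S"
    and "\<And>y. y \<in> topspace X \<Longrightarrow> s y \<in> S \<Longrightarrow> y \<in> T"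
  shows "X interior_of T \<noteq> {}"
proof -
  define W where "W = {y \<in> topspace X. s y \<in> Y interior_of S}"
  have "openin X W"
    unfolding W_def using assms(1) by (rule openin_continuous_map_preimage) simp
  moreover have "W \<subseteq> T"
    using assms(4) interior_of_subset[of Y S] by (auto simp: W_def)
  ultimately have "W \<subseteq> X interior_of T"
    by (simp add: interior_of_maximal)
  moreover have "y0 \<in> W"
    using assms(2,3) by (simp add: W_def)
  ultimately show ?thesis by blast
qed

text \<open>A section of the projection \<open>MV n \<rightarrow> PMV n\<close> that keeps the diagonal of \<open>x\<close>.\<close>

definition pmv_section :: "nat \<Rightarrow> (nat \<Rightarrow> real) \<Rightarrow> (nat \<Rightarrow> real) \<Rightarrow> nat \<Rightarrow> real" where
  "pmv_section n x y = tri_vec n (\<lambda>i j. if i = j then x (tri_index j j) else y (tri_index i (j - 1)))"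

lemma continuous_map_pmv_section:
  "continuous_map (Euclidean_space (n choose 2)) (Euclidean_space ((n + 1) choose 2)) (pmv_section n x)"
proof -
  have "continuous_on UNIV (\<lambda>y. pmv_section n x y k)" for k
    unfolding pmv_section_def
  proof (intro continuous_on_tri_vec)
    fix i j
    show "continuous_on UNIV (\<lambda>y. if i = j then x (tri_index j j) else y (tri_index i (j - 1)))"
      by (cases "i = j") (simp_all add: continuous_on_coordinate)
  qed
  moreover have "pmv_section n x y k = 0" if "(n + 1) choose 2 \<le> k" for y k
    using that unfolding pmv_section_def by (rule tri_vec_eq_0)
  ultimately have "continuous_map (subtopology (Euclidean_space (n choose 2)) (topspace (Euclidean_space (n choose 2))))
      (Euclidean_space ((n + 1) choose 2)) (pmv_section n x)"
    by (rule continuous_map_Euclidean_spaceI)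
  then show ?thesis
    by simp
qed

lemma pmv_section_restrict:
  assumes "x \<in> topspace (Euclidean_space ((n + 1) choose 2))"
  shows "pmv_section n x (tri_vec (n - 1) (\<lambda>i j. x (tri_index i (Suc j)))) = x"
proof -
  have "pmv_section n x (tri_vec (n - 1) (\<lambda>i j. x (tri_index i (Suc j)))) = tri_vec n (\<lambda>i j. x (tri_index i j))"
    unfolding pmv_section_def by (intro tri_vec_cong) (auto simp: tri_vec_tri_index)
  then show ?thesis
    using assms by (simp add: tri_vec_eta)
qed

lemma PMV_if_pmv_section_in_MV:
  assumes "y \<in> topspace (Euclidean_space (n choose 2))" "pmv_section n x y \<in> MV n"
  shows "y \<in> PMV n"
proof -
  obtain K where K: "\<forall>i<n. convex_body2 (K i)"
    "\<forall>i j. i \<le> j \<and> j < n \<longrightarrow> pmv_section n x y (tri_index i j) = mixed_area (K i) (K j)"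
    using assms(2) unfolding MV_def tri_index_def by blast
  have "y (tri_index i (j - 1)) = mixed_area (K i) (K j)" if "i < j" "j < n" for i j
  proof -
    have "pmv_section n x y (tri_index i j) = mixed_area (K i) (K j)"
      using K(2) that by simp
    then show ?thesis
      using that by (simp add: pmv_section_def tri_vec_tri_index)
  qed
  show ?thesis
    unfolding PMV_def
  proof (intro CollectI exI[of _ K] conjI allI impI)
    show "convex_body2 (K i)" if "i < n" for i
      using K that by blast
    show "y (j * (j - 1) div 2 + i) = mixed_area (K i) (K j)" if "i < j \<and> j < n" for i j
    proof -
      have "j * (j - 1) div 2 + i = tri_index i (j - 1)"
        using that by (cases j) (simp_all add: tri_index_def mult.commute)
      then show ?thesis
        using that \<open>\<And>i j. i < j \<Longrightarrow> j < n \<Longrightarrow> y (tri_index i (j - 1)) = _\<close> by simp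
    qed
    show "y k = 0" if "n choose 2 \<le> k" for k
      using assms(1) that by (simp add: topspace_Euclidean_space)
  qed
qed

lemma interior_PMV_nonempty:
  assumes "1 \<le> n" "Euclidean_space ((n + 1) choose 2) interior_of MV n \<noteq> {}"
  shows "Euclidean_space (n choose 2) interior_of PMV n \<noteq> {}"
proof -
  obtain x where x: "x \<in> Euclidean_space ((n + 1) choose 2) interior_of MV n"
    using assms(2) by blast
  then have "x \<in> topspace (Euclidean_space ((n + 1) choose 2))"
    using interior_of_subset_topspace[of _ "MV n"] by blast
  have "n choose 2 = (n - 1 + 1) choose 2"
    using assms(1) by simp
  then have "tri_vec (n - 1) (\<lambda>i j. x (tri_index i (Suc j))) \<in> topspace (Euclidean_space (n choose 2))"
    by (simp add: topspace_Euclidean_space tri_vec_eq_0)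
  then show ?thesis
    using x pmv_section_restrict[OF \<open>x \<in> topspace _\<close>]
    by (intro interior_of_nonempty_by_section[OF continuous_map_pmv_section[of n x]] PMV_if_pmv_section_in_MV) auto
qed

theorem mainTheorem17:
  fixes n :: nat
  assumes "n \<ge> 2"
  shows "Euclidean_space ((n + 1) choose 2) interior_of MV n \<noteq> {} \<and>
         Euclidean_space (n choose 2) interior_of PMV n \<noteq> {}"
  using interior_MV_nonempty[OF assms] interior_PMV_nonempty[of n] assms by simp

end
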